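(* Let $S$ be a string of length $n$ and let $P\subseteq[n]$ be a $(\tau,\delta)$-partitioning set of $S$ for parameters $1\le\tau\le\delta\le n$. Let $i,j\in[n]$ and let $\ell=\mathrm{LCE}(i,j)$. If $\ell>2\delta$ then $$\{p-i\mid p\in P\cap[i+\delta..i+\ell-\delta-1]\}=\{p-j\mid p\in P\cap[j+\delta..j+\ell-\delta-1]\}.$$
   Context: $[a..b]=\{a,a+1,\dots,b\}$. $\mathrm{LCE}(i,j)=\min\{k\ge0\mid S[i+k]\ne S[j+k]\}$. A prefix of length $y\ge1$ of a string $W$ is a period of $W$ if $W[x]=W[x+y]$ for all $1\le x\le |W|-y$; $\rho_W$ denotes the length of the shortest period, and $W$ is periodic if $\rho_W\le |W|/2$. A set $P\subseteq[n]$ is a $(\tau,\delta)$-partitioning set of $S$ if (1) (local consistency) for any $i,j\in[1+\delta..n-\delta]$ with $S[i-\delta..i+\delta]=S[j-\delta..j+\delta]$ we have $i\in P\Leftrightarrow j\in P$; and (2) (compactness) for any two consecutive elements $p_i<p_{i+1}$ of $P\cup\{1,n+1\}$, either $p_{i+1}-p_i\le\tau$, or $p_{i+1}-p_i>\tau$ and $u=S[p_i..p_{i+1}-1]$ is periodic with $\rho_u\le\tau$. *)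

theory Defs
  imports Main
begin

text \<open>Strings are lists; positions are 1-indexed: S[x] = S ! (x - 1), for x in [1..length S].\<close>

definition chr :: "'a list \<Rightarrow> nat \<Rightarrow> 'a" where
  "chr S x = S ! (x - 1)"

text \<open>Substring S[p..q-1] (1-indexed, length q - p).\<close>
definition substr :: "'a list \<Rightarrow> nat \<Rightarrow> nat \<Rightarrow> 'a list" where
  "substr S p q = take (q - p) (drop (p - 1) S)"

text \<open>LCE(i,j) = min{k \<ge> 0 | S[i+k] \<noteq> S[j+k]}, where a position outside [1..n] counts as a mismatch.\<close>
definition LCE :: "'a list \<Rightarrow> nat \<Rightarrow> nat \<Rightarrow> nat" where
  "LCE S i j = (LEAST k. \<not> (i + k \<le> length S \<and> j + k \<le> length S \<and> chr S (i + k) = chr S (j + k)))"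

definition is_period :: "'a list \<Rightarrow> nat \<Rightarrow> bool" where
  "is_period W y \<longleftrightarrow> 1 \<le> y \<and> y \<le> length W \<and>
     (\<forall>x. 1 \<le> x \<and> x \<le> length W - y \<longrightarrow> chr W x = chr W (x + y))"

definition rho :: "'a list \<Rightarrow> nat" where
  "rho W = (LEAST y. is_period W y)"

definition periodic :: "'a list \<Rightarrow> bool" where
  "periodic W \<longleftrightarrow> 2 * rho W \<le> length W"

definition partitioning_set :: "'a list \<Rightarrow> nat \<Rightarrow> nat \<Rightarrow> nat set \<Rightarrow> bool" where
  "partitioning_set S \<tau> \<delta> P \<longleftrightarrow>
     P \<subseteq> {1..length S} \<and>
     (\<forall>i j. i \<in> {1 + \<delta>..length S - \<delta>} \<and> j \<in> {1 + \<delta>..length S - \<delta>} \<and>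
        (\<forall>t \<le> 2 * \<delta>. chr S (i - \<delta> + t) = chr S (j - \<delta> + t))
        \<longrightarrow> (i \<in> P \<longleftrightarrow> j \<in> P)) \<and>
     (\<forall>p q. p \<in> P \<union> {1, length S + 1} \<and> q \<in> P \<union> {1, length S + 1} \<and> p < q \<and>
        (\<forall>r \<in> P \<union> {1, length S + 1}. \<not> (p < r \<and> r < q))
        \<longrightarrow> q - p \<le> \<tau> \<or> (q - p > \<tau> \<and> periodic (substr S p q) \<and> rho (substr S p q) \<le> \<tau>))"

end

theory Submission
  imports Defs
begin

text \<open>A position p of the window at i has its whole context S[p-\<delta>..p+\<delta>] inside the common
  extension S[i..i+LCE(i,j)-1] = S[j..j+LCE(i,j)-1], so p and its copy p - i + j have equal
  contexts and local consistency puts both or neither into P.\<close>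

definition locally_consistent :: "'a list \<Rightarrow> nat \<Rightarrow> nat set \<Rightarrow> bool" where
  "locally_consistent S \<delta> P \<longleftrightarrow>
     (\<forall>i j. i \<in> {1 + \<delta>..length S - \<delta>} \<and> j \<in> {1 + \<delta>..length S - \<delta>} \<and>
        (\<forall>t \<le> 2 * \<delta>. chr S (i - \<delta> + t) = chr S (j - \<delta> + t))
        \<longrightarrow> (i \<in> P \<longleftrightarrow> j \<in> P))"

lemma partitioning_set_locally_consistent:
  "partitioning_set S \<tau> \<delta> P \<Longrightarrow> locally_consistent S \<delta> P"
  unfolding partitioning_set_def locally_consistent_def by blast

lemma LCE_commute: "LCE S i j = LCE S j i"
  unfolding LCE_def by (rule arg_cong[where f = Least]) auto

lemma chr_eq_below_LCE:
  assumes "k < LCE S i j"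
  shows "i + k \<le> length S" and "j + k \<le> length S" and "chr S (i + k) = chr S (j + k)"
  using not_less_Least[OF assms[unfolded LCE_def]] by auto

lemma locally_consistent_shift_mem:
  assumes lc: "locally_consistent S \<delta> P" and "1 \<le> i" "1 \<le> j"
    and "p \<in> P" and lower: "i + \<delta> \<le> p" and upper: "p + \<delta> < i + LCE S i j"
  shows "p - i + j \<in> P"
proof -
  define q where "q = p - i + j"
  have "LCE S i j - 1 < LCE S i j" using lower upper by linarith
  then have end_i: "i + (LCE S i j - 1) \<le> length S" and end_j: "j + (LCE S i j - 1) \<le> length S"
    using chr_eq_below_LCE by blast+
  have "p \<in> {1 + \<delta>..length S - \<delta>}" "q \<in> {1 + \<delta>..length S - \<delta>}"
    using \<open>1 \<le> i\<close> \<open>1 \<le> j\<close> lower upper end_i end_j unfolding q_def by auto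
  moreover have "chr S (p - \<delta> + t) = chr S (q - \<delta> + t)" if "t \<le> 2 * \<delta>" for t
  proof -
    have "p - i - \<delta> + t < LCE S i j" using that lower upper by linarith
    from chr_eq_below_LCE(3)[OF this] show ?thesis
      using lower unfolding q_def by (simp add: algebra_simps)
  qed
  ultimately show ?thesis
    using lc \<open>p \<in> P\<close> unfolding locally_consistent_def q_def by blast
qed

lemma locally_consistent_window_subset:
  assumes lc: "locally_consistent S \<delta> P" and "1 \<le> i" "1 \<le> j"
  shows "(\<lambda>p. p - i) ` (P \<inter> {i + \<delta>..i + LCE S i j - \<delta> - 1})
       \<subseteq> (\<lambda>p. p - j) ` (P \<inter> {j + \<delta>..j + LCE S i j - \<delta> - 1})"
proof
  fix x assume "x \<in> (\<lambda>p. p - i) ` (P \<inter> {i + \<delta>..i + LCE S i j - \<delta> - 1})"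
  then obtain p where "p \<in> P" "i + \<delta> \<le> p" "p \<le> i + LCE S i j - \<delta> - 1" "x = p - i"
    by auto
  moreover from this have "p + \<delta> < i + LCE S i j" using \<open>1 \<le> i\<close> by linarith
  ultimately have "p - i + j \<in> P \<inter> {j + \<delta>..j + LCE S i j - \<delta> - 1}" "x = (p - i + j) - j"
    using locally_consistent_shift_mem[OF assms] by auto
  then show "x \<in> (\<lambda>p. p - j) ` (P \<inter> {j + \<delta>..j + LCE S i j - \<delta> - 1})" by blast
qed

theorem lemma7:
  fixes S :: "'a list" and n \<tau> \<delta> i j :: nat and P :: "nat set"
  assumes "n = length S"
    and "partitioning_set S \<tau> \<delta> P"
    and "1 \<le> \<tau>" and "\<tau> \<le> \<delta>" and "\<delta> \<le> n"
    and "i \<in> {1..n}" and "j \<in> {1..n}"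
    and "LCE S i j > 2 * \<delta>"
  shows "(\<lambda>p. p - i) ` (P \<inter> {i + \<delta>..i + LCE S i j - \<delta> - 1})
       = (\<lambda>p. p - j) ` (P \<inter> {j + \<delta>..j + LCE S i j - \<delta> - 1})"
proof -
  have lc: "locally_consistent S \<delta> P"
    using assms(2) by (rule partitioning_set_locally_consistent)
  have "1 \<le> i" "1 \<le> j" using assms(6,7) by auto
  show ?thesis
    using locally_consistent_window_subset[OF lc \<open>1 \<le> i\<close> \<open>1 \<le> j\<close>]
      locally_consistent_window_subset[OF lc \<open>1 \<le> j\<close> \<open>1 \<le> i\<close>]
    by (simp add: LCE_commute)
qed

end
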